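(* Let $k_{\max}=k_{\max}(x)$ be a positive-integer-valued function with $\log k_{\max}(x)/\log x\to0$. Choose $m$ uniformly at random from $\{1,\dots,x\}$. For a positive integer $k$ and a prime $p$ let $A_k^p$ be the event that every $f\in[f_{m-k,m}]$ whose tuple satisfies $p\nmid a_0a_k$ is irreducible over $\mathbb{Q}$. Then \[ \lim_{x\to\infty}\mathbb{P}\Big(\bigcup_{p>k_{\max}}\ \bigcap_{k=1}^{k_{\max}}A_k^p\Big)=1, \] where the union is over primes $p>k_{\max}$.
   Context: For integers $0\le n<m$, $f_{n,m}(x)=\sum_{j=n}^{m}\frac{x^{j-n}}{j!}$. For a polynomial $f=\sum_{j=0}^{k}b_jx^j$ with $b_0b_k\ne0$ define $[f]=\{\sum_{j=0}^k a_jb_jx^j:\ a_j\in\mathbb{Z},\ a_0a_k\neq0\}$; each element of $[f]$ comes with its tuple $(a_0,\dots,a_k)$. Events involving $f_{m-k,m}$ are understood to include the requirement $m-k\ge0$. *)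

theory Defs
  imports Complex_Main "HOL-Computational_Algebra.Polynomial_Factorial"
begin

definition f_poly :: "nat \<Rightarrow> nat \<Rightarrow> rat poly" where
  "f_poly n m = (\<Sum>j=n..m. monom (1 / fact j) (j - n))"

text \<open>The element of [f] attached to the integer tuple a = (a_0,...,a_k), k = degree f.\<close>
definition bracket_elem :: "rat poly \<Rightarrow> (nat \<Rightarrow> int) \<Rightarrow> rat poly" where
  "bracket_elem f a = (\<Sum>j\<le>degree f. monom (of_int (a j) * coeff f j) j)"

definition event_A :: "nat \<Rightarrow> nat \<Rightarrow> nat \<Rightarrow> bool" where
  "event_A k p m \<longleftrightarrow> k \<le> m \<and>
     (\<forall>a :: nat \<Rightarrow> int.
        a 0 * a (degree (f_poly (m - k) m)) \<noteq> 0 \<longrightarrow>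
        \<not> (int p dvd a 0 * a (degree (f_poly (m - k) m))) \<longrightarrow>
        irreducible (bracket_elem (f_poly (m - k) m) a))"

end

theory Submission
  imports
    Defs
    "Berlekamp_Zassenhaus.Factor_Bound"
    "HOL-Number_Theory.Prime_Powers"
    "HOL-Real_Asymp.Real_Asymp"
begin

text \<open>
  Let \<open>p > k\<close> be a prime dividing \<open>m\<close> exactly once, and let \<open>f \<in> [f\<^sub>m\<^sub>-\<^sub>k\<^sub>,\<^sub>m]\<close> have
  tuple \<open>a\<close> with \<open>p\<close> not dividing \<open>a\<^sub>0 a\<^sub>k\<close>. The coefficient of \<open>x\<^sup>i\<close> in \<open>m! f\<close> is the
  integer \<open>a\<^sub>i m!/(m-k+i)!\<close>: it is divisible by \<open>m\<close> for \<open>i < k\<close>, equals \<open>a\<^sub>k\<close> for \<open>i = k\<close>,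
  and for \<open>i = 0\<close> it is \<open>a\<^sub>0 m\<close> times a product of \<open>k - 1\<close> consecutive integers below \<open>m\<close>,
  none divisible by \<open>p\<close>. So \<open>m! f\<close> is \<open>p\<close>-Eisenstein and \<open>f\<close> is irreducible. Hence every \<open>m\<close>
  divisible exactly once by some prime \<open>p > kmax\<close> lies in the union. Every other \<open>m \<le> x\<close> is
  divisible by \<open>d\<^sup>2\<close> for some \<open>d > y\<close> (at most \<open>x/y\<close> such \<open>m\<close>) or is \<open>y\<close>-smooth, and a
  Chebyshev-type estimate gives \<open>\<Sum> ln m \<le> 4x ln y\<close> over the \<open>y\<close>-smooth \<open>m \<le> x\<close>, so there
  are \<open>O(x ln y / ln x)\<close> of them. With \<open>y = kmax \<lceil>ln x\<rceil>\<close> both exceptional sets have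
  density \<open>o(1)\<close>.
\<close>

\<comment> \<open>\<open>Factor_Bound\<close> imports HOL-Algebra, whose polynomial constants would shadow these.\<close>
hide_const (open) UnivPoly.coeff UnivPoly.monom Module.module.smult

lemma coeff_f_poly:
  assumes "n \<le> m"
  shows "coeff (f_poly n m) i = (if i \<le> m - n then 1 / fact (n + i) else 0)"
proof -
  have "coeff (f_poly n m) i = (\<Sum>j=n..m. if j = n + i then 1 / fact j else 0)"
    unfolding f_poly_def coeff_sum coeff_monom by (intro sum.cong) auto
  also have "\<dots> = (if i \<le> m - n then 1 / fact (n + i) else 0)"
    using assms by (subst sum.delta) auto
  finally show ?thesis .
qed

lemma degree_f_poly:
  assumes "n \<le> m"
  shows "degree (f_poly n m) = m - n"
  using assms by (intro antisym degree_le le_degree) (auto simp: coeff_f_poly)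

lemma coeff_bracket_elem:
  "coeff (bracket_elem f a) i = (if i \<le> degree f then of_int (a i) * coeff f i else 0)"
  unfolding bracket_elem_def coeff_sum coeff_monom by (subst sum.delta) auto

lemma eisenstein_cofactor_degree_0:
  fixes R S :: "int poly"
  assumes p: "prime p" and lead: "\<not> p dvd lead_coeff (R * S)"
    and low: "\<forall>i<degree (R * S). p dvd coeff (R * S) i"
    and S0: "\<not> p dvd coeff S 0"
  shows "degree S = 0"
proof -
  have "R \<noteq> 0" "S \<noteq> 0" using lead by auto
  then have deg: "degree (R * S) = degree R + degree S" by (rule degree_mult_eq)
  have "\<not> p dvd lead_coeff R" using lead by (auto simp: lead_coeff_mult)
  define i where "i = (LEAST i. \<not> p dvd coeff R i)"
  have Ri: "\<not> p dvd coeff R i"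
    unfolding i_def by (rule LeastI[of _ "degree R"]) fact
  have i_le: "i \<le> degree R"
    unfolding i_def by (rule Least_le) fact
  have below: "p dvd coeff R j" if "j < i" for j
    using that not_less_Least unfolding i_def by blast
  have "coeff (R * S) i = (\<Sum>j<i. coeff R j * coeff S (i - j)) + coeff R i * coeff S 0"
    by (simp add: coeff_mult lessThan_Suc_atMost[symmetric])
  moreover have "p dvd (\<Sum>j<i. coeff R j * coeff S (i - j))"
    using below by (auto intro: dvd_sum)
  moreover have "\<not> p dvd coeff R i * coeff S 0"
    using Ri S0 p prime_dvd_mult_iff by blast
  ultimately have "\<not> p dvd coeff (R * S) i" by (metis dvd_add_right_iff)
  with low have "\<not> i < degree (R * S)" by blast
  with deg i_le show ?thesis by linarith
qed

lemma eisenstein_factor_degree_0: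
  fixes R S :: "int poly"
  assumes p: "prime p" and lead: "\<not> p dvd lead_coeff (R * S)"
    and low: "\<forall>i<degree (R * S). p dvd coeff (R * S) i"
    and const: "\<not> p^2 dvd coeff (R * S) 0"
  shows "degree R = 0 \<or> degree S = 0"
proof (cases "degree (R * S) = 0")
  case True
  moreover have "R \<noteq> 0" "S \<noteq> 0" using lead by auto
  ultimately show ?thesis by (simp add: degree_mult_eq)
next
  case False
  have RS0: "coeff (R * S) 0 = coeff R 0 * coeff S 0" by (simp add: coeff_mult)
  with False low p have "p dvd coeff R 0 \<or> p dvd coeff S 0"
    by (metis gr0I prime_dvd_mult_iff)
  moreover have "\<not> (p dvd coeff R 0 \<and> p dvd coeff S 0)"
    using const RS0 by (metis mult_dvd_mono power2_eq_square)
  ultimately show ?thesis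
    using eisenstein_cofactor_degree_0[OF p lead low]
      eisenstein_cofactor_degree_0[of p S R] p lead low
    by (metis mult.commute)
qed

lemma irreducible_of_int_poly_eisenstein:
  fixes H :: "int poly"
  assumes p: "prime p" and deg: "degree H > 0" and lead: "\<not> p dvd lead_coeff H"
    and low: "\<forall>i<degree H. p dvd coeff H i" and const: "\<not> p^2 dvd coeff H 0"
  shows "irreducible (of_int_poly H :: rat poly)"
proof (fold irreducible_connect_field, rule irreducible\<^sub>dI)
  show "degree (of_int_poly H :: rat poly) > 0" using deg by simp
  fix q r :: "rat poly"
  assume "degree q < degree (of_int_poly H :: rat poly)" "degree r < degree (of_int_poly H :: rat poly)"
    and "of_int_poly H = q * r"
  \<comment> \<open>Gauss's lemma\<close>
  then obtain R S where "H = R * S" "degree R = degree q" "degree S = degree r"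
    using rat_to_int_factor by force
  moreover have "H \<noteq> 0" using deg by auto
  ultimately show False
    using eisenstein_factor_degree_0[of p R S] p lead low const \<open>degree q < _\<close> \<open>degree r < _\<close>
    by (auto simp: degree_mult_eq)
qed

lemma fact_eq_fact_mult_prod:
  assumes "j \<le> m"
  shows "fact m = fact j * of_nat (\<Prod>{j + 1..m})"
proof -
  have "(fact m :: nat) = fact j * \<Prod>{j + 1..m}"
    using fact_div_fact[OF assms] fact_dvd[OF assms] by (metis dvd_mult_div_cancel)
  then show ?thesis by (metis of_nat_fact of_nat_mult)
qed

definition fact_scaled_bracket :: "nat \<Rightarrow> nat \<Rightarrow> (nat \<Rightarrow> int) \<Rightarrow> int poly" where
  "fact_scaled_bracket n m a = (\<Sum>i\<le>m - n. monom (a i * int (\<Prod>{n + i + 1..m})) i)"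

lemma coeff_fact_scaled_bracket:
  "coeff (fact_scaled_bracket n m a) i = (if i \<le> m - n then a i * int (\<Prod>{n + i + 1..m}) else 0)"
  unfolding fact_scaled_bracket_def coeff_sum coeff_monom by (subst sum.delta) auto

lemma of_int_poly_fact_scaled_bracket:
  assumes "n \<le> m"
  shows "of_int_poly (fact_scaled_bracket n m a) = smult (fact m) (bracket_elem (f_poly n m) a)"
proof (rule poly_eqI)
  fix i
  show "coeff (of_int_poly (fact_scaled_bracket n m a)) i
        = coeff (smult (fact m) (bracket_elem (f_poly n m) a)) i"
  proof (cases "i \<le> m - n")
    case True
    then have "(fact m :: rat) = fact (n + i) * of_nat (\<Prod>{n + i + 1..m})"
      using assms by (intro fact_eq_fact_mult_prod) simp
    then show ?thesis
      using assms True
      by (simp add: coeff_map_poly coeff_fact_scaled_bracket coeff_bracket_elem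
          degree_f_poly coeff_f_poly del: of_nat_prod)
  qed (use assms in \<open>simp add: coeff_map_poly coeff_fact_scaled_bracket coeff_bracket_elem
          degree_f_poly\<close>)
qed

lemma prime_not_dvd_prod_below:
  fixes p m n :: nat
  assumes p: "prime p" and "p dvd m" and "m < n + p"
  shows "\<not> p dvd \<Prod>{n + 1..m - 1}"
proof
  assume "p dvd \<Prod>{n + 1..m - 1}"
  then obtain t where t: "t \<in> {n + 1..m - 1}" "p dvd t"
    using prime_dvd_prod_iff[OF _ p] by (metis finite_atLeastAtMost)
  then have "p dvd m - t" using \<open>p dvd m\<close> by (simp add: dvd_diff_nat)
  moreover have "0 < m - t" "m - t < p" using t(1) \<open>m < n + p\<close> by auto
  ultimately show False by (meson dvd_imp_le not_le)
qed

lemma degree_fact_scaled_bracket: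
  assumes "a (m - n) \<noteq> 0"
  shows "degree (fact_scaled_bracket n m a) = m - n"
  using assms by (intro antisym degree_le le_degree) (auto simp: coeff_fact_scaled_bracket)

lemma dvd_coeff_fact_scaled_bracket:
  assumes "i < m - n"
  shows "int m dvd coeff (fact_scaled_bracket n m a) i"
proof -
  have "m dvd \<Prod>{n + i + 1..m}"
    using assms by (intro dvd_prodI) auto
  then show ?thesis
    using assms by (simp add: coeff_fact_scaled_bracket del: of_nat_prod flip: int_dvd_int_iff)
qed

lemma coeff_0_fact_scaled_bracket:
  assumes "n < m"
  shows "coeff (fact_scaled_bracket n m a) 0 = a 0 * int (\<Prod>{n + 1..m - 1}) * int m"
proof -
  have "{n + 1..m} = insert m {n + 1..m - 1}" "m \<notin> {n + 1..m - 1}"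
    using assms by auto
  then have "\<Prod>{n + 1..m} = \<Prod>{n + 1..m - 1} * m"
    by simp
  then show ?thesis
    by (simp add: coeff_fact_scaled_bracket del: of_nat_prod)
qed

lemma irreducible_bracket_elem_f_poly:
  fixes p m n :: nat
  assumes p: "prime p" and "p dvd m" and "\<not> p^2 dvd m" and "n < m" and "m < n + p"
    and coprime: "\<not> int p dvd a 0 * a (m - n)"
  shows "irreducible (bracket_elem (f_poly n m) a)"
proof -
  define H where "H = fact_scaled_bracket n m a"
  have "a (m - n) \<noteq> 0" using coprime by auto
  then have deg_H: "degree H = m - n"
    by (simp add: H_def degree_fact_scaled_bracket)
  have "lead_coeff H = a (m - n)"
    unfolding deg_H by (simp add: H_def coeff_fact_scaled_bracket)
  then have "\<not> int p dvd lead_coeff H"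
    using coprime dvd_mult by metis
  moreover have "int p dvd coeff H i" if "i < degree H" for i
    using dvd_coeff_fact_scaled_bracket[of i m n a] that deg_H \<open>p dvd m\<close>
    by (simp add: H_def) (meson dvd_trans int_dvd_int_iff)
  moreover have "\<not> (int p)^2 dvd coeff H 0"
  proof
    define c where "c = a 0 * int (\<Prod>{n + 1..m - 1})"
    have "\<not> int p dvd a 0"
      using coprime dvd_mult2 by blast
    moreover have "\<not> int p dvd int (\<Prod>{n + 1..m - 1})"
      using prime_not_dvd_prod_below[OF p \<open>p dvd m\<close> \<open>m < n + p\<close>] by (simp del: of_nat_prod)
    ultimately have "\<not> int p dvd c"
      using p by (simp add: c_def prime_dvd_mult_iff del: of_nat_prod)
    then have "algebraic_semidom_class.coprime ((int p)^2) c"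
      using p by (simp add: prime_imp_coprime)
    moreover assume "(int p)^2 dvd coeff H 0"
    ultimately have "(int p)^2 dvd int m"
      using coeff_0_fact_scaled_bracket[OF \<open>n < m\<close>]
      by (simp add: H_def c_def coprime_dvd_mult_right_iff del: of_nat_prod)
    then show False
      using \<open>\<not> p^2 dvd m\<close> int_dvd_int_iff[of "p^2" m] by simp
  qed
  ultimately have "irreducible (of_int_poly H :: rat poly)"
    using p \<open>n < m\<close> deg_H by (intro irreducible_of_int_poly_eisenstein[of "int p"]) auto
  then show ?thesis
    using of_int_poly_fact_scaled_bracket[of n m a] \<open>n < m\<close> by (simp add: H_def)
qed

lemma event_A_if_exact_prime_divisor:
  fixes p m k :: nat
  assumes p: "prime p" and "p dvd m" and "\<not> p^2 dvd m" and "1 \<le> k" and "k < p"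
  shows "event_A k p m"
proof -
  have "m \<noteq> 0" using \<open>\<not> p^2 dvd m\<close> by (metis dvd_0_right)
  then have "p \<le> m" using \<open>p dvd m\<close> by (simp add: dvd_imp_le)
  then have "m - k < m" "m < (m - k) + p" "m - (m - k) = k"
    using \<open>1 \<le> k\<close> \<open>k < p\<close> by linarith+
  then show ?thesis
    using irreducible_bracket_elem_f_poly[OF assms(1-3), of "m - k"]
    by (simp add: event_A_def degree_f_poly)
qed

lemma card_multiples:
  fixes d x :: nat
  assumes "d > 0"
  shows "card {m \<in> {1..x}. d dvd m} = x div d"
proof -
  have "{m \<in> {1..x}. d dvd m} = (\<lambda>i. d * i) ` {1..x div d}"
  proof (intro equalityI subsetI)
    fix m assume "m \<in> {m \<in> {1..x}. d dvd m}"
    then obtain i where "m = d * i" "1 \<le> d * i" "d * i \<le> x" by auto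
    moreover from this have "1 \<le> i" "i \<le> x div d"
      using assms by (auto simp: less_eq_div_iff_mult_less_eq mult.commute)
    ultimately show "m \<in> (\<lambda>i. d * i) ` {1..x div d}" by auto
  next
    fix m assume "m \<in> (\<lambda>i. d * i) ` {1..x div d}"
    then obtain i where "i \<in> {1..x div d}" "m = d * i" by blast
    moreover from this have "d * i \<le> x"
      using assms by (simp add: less_eq_div_iff_mult_less_eq mult.commute)
    ultimately show "m \<in> {m \<in> {1..x}. d dvd m}" using assms by auto
  qed
  then show ?thesis using assms by (simp add: card_image inj_on_def)
qed

lemma card_multiples_le:
  fixes d x :: nat
  assumes "d > 0"
  shows "real (card {m \<in> {1..x}. d dvd m}) \<le> real x / real d"
  by (simp only: card_multiples[OF assms]) (rule of_nat_div_le_of_nat)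

lemma sum_ln_eq_sum_mangoldt:
  fixes x :: nat
  assumes "S \<subseteq> {1..x}"
  shows "(\<Sum>m\<in>S. ln (real m)) = (\<Sum>d\<in>{1..x}. mangoldt d * real (card {m \<in> S. d dvd m}))"
proof -
  have "finite S" using assms finite_subset by blast
  have "ln (real m) = (\<Sum>d\<in>{1..x}. if d dvd m then mangoldt d else 0)" if "m \<in> S" for m
  proof -
    have "0 < m" "m \<le> x" using that assms by auto
    then have "{d. d dvd m} = {d \<in> {1..x}. d dvd m}"
      by (auto dest: dvd_imp_le simp: dvd_pos_nat Suc_le_eq)
    then have "ln (real m) = (\<Sum>d \<in> {d \<in> {1..x}. d dvd m}. mangoldt d)"
      using mangoldt_sum[of m, where 'a = real] \<open>0 < m\<close> by simp
    then show ?thesis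
      by (simp only: sum.inter_filter[OF finite_atLeastAtMost])
  qed
  then have "(\<Sum>m\<in>S. ln (real m)) = (\<Sum>m\<in>S. \<Sum>d\<in>{1..x}. if d dvd m then mangoldt d else 0)"
    by simp
  also have "\<dots> = (\<Sum>d\<in>{1..x}. \<Sum>m\<in>S. if d dvd m then mangoldt d else 0)"
    by (rule sum.swap)
  also have "\<dots> = (\<Sum>d\<in>{1..x}. mangoldt d * real (card {m \<in> S. d dvd m}))"
    using \<open>finite S\<close> by (simp add: sum.inter_filter[symmetric] mult.commute)
  finally show ?thesis .
qed

lemma pow_le_exp_mult_fact: "real n ^ n \<le> exp (real n) * fact n"
proof -
  have "real n ^ n / fact n \<le> exp (real n)"
    using sum_le_suminf[OF summable_exp, of "{n}" "real n"]
    by (simp add: exp_def field_simps)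
  then show ?thesis by (simp add: field_simps)
qed

lemma sum_ln_ratio_le: "(\<Sum>m=1..x. ln (real x / real m)) \<le> real x"
proof (cases "x = 0")
  case False
  have "(\<Sum>m=1..x. ln (real x / real m)) = (\<Sum>m=1..x. ln (real x) - ln (real m))"
    by (intro sum.cong) (auto simp: ln_div)
  also have "\<dots> = ln (real x ^ x) - ln (fact x)"
    using False ln_prod[of "{1..x}" real] by (simp add: sum_subtractf ln_realpow fact_prod)
  also have "\<dots> \<le> ln (exp (real x) * fact x) - ln (fact x)"
    using False pow_le_exp_mult_fact[of x] by simp
  also have "\<dots> = real x" by (simp add: ln_mult)
  finally show ?thesis .
qed simp

lemma le_two_mult_div_mult:
  fixes p y :: nat
  assumes "0 < p" and "p \<le> y"
  shows "y \<le> 2 * (y div p) * p"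
proof -
  have "p \<le> y div p * p"
    using assms div_le_mono[of p y p] by simp
  then show ?thesis
    using div_mult_mod_eq[of y p] mod_less_divisor[OF \<open>0 < p\<close>, of y] by linarith
qed

text \<open>A weak Mertens bound, via \<open>ln y! = \<Sum>\<^sub>d \<Lambda>(d) \<lfloor>y/d\<rfloor>\<close>.\<close>
lemma sum_ln_prime_div_prime_le:
  fixes y :: nat
  assumes "y \<ge> 1"
  shows "(\<Sum>p | prime p \<and> p \<le> y. ln (real p) / real p) \<le> 2 * ln (real y)"
proof -
  define P where "P = {p. prime p \<and> p \<le> y}"
  have "finite P" by (simp add: P_def)
  have "real y / 2 * (\<Sum>p\<in>P. ln (real p) / real p) = (\<Sum>p\<in>P. ln (real p) * (real y / (2 * real p)))"
    by (simp add: sum_distrib_left field_simps)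
  also have "\<dots> \<le> (\<Sum>p\<in>P. mangoldt p * real (card {m \<in> {1..y}. p dvd m}))"
  proof (intro sum_mono)
    fix p assume "p \<in> P"
    then have "prime p" "0 < p" "p \<le> y" by (auto simp: P_def prime_gt_0_nat)
    then have "y \<le> 2 * (y div p) * p"
      by (intro le_two_mult_div_mult) simp_all
    then have "real y \<le> real (2 * (y div p) * p)"
      by (simp only: of_nat_le_iff)
    then have "real y / (2 * real p) \<le> real (y div p)"
      using \<open>0 < p\<close> by (simp add: divide_le_eq mult_ac)
    moreover have "0 \<le> ln (real p)"
      using \<open>0 < p\<close> by simp
    ultimately show "ln (real p) * (real y / (2 * real p)) \<le> mangoldt p * real (card {m \<in> {1..y}. p dvd m})"
      unfolding card_multiples[OF \<open>0 < p\<close>] mangoldt_prime[OF \<open>prime p\<close>] of_real_eq_id id_def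
      by (rule mult_left_mono)
  qed
  also have "\<dots> \<le> (\<Sum>d\<in>{1..y}. mangoldt d * real (card {m \<in> {1..y}. d dvd m}))"
    by (rule sum_mono2) (auto simp: P_def mangoldt_nonneg prime_gt_0_nat Suc_le_eq)
  also have "\<dots> = (\<Sum>m=1..y. ln (real m))"
    by (rule sum_ln_eq_sum_mangoldt[symmetric]) simp
  also have "\<dots> \<le> real y * ln (real y)"
    using sum_mono[of "{1..y}" "\<lambda>m. ln (real m)" "\<lambda>_. ln (real y)"] by simp
  finally show ?thesis
    using assms unfolding P_def by (simp add: field_simps)
qed

lemma sum_power_le_double:
  fixes r :: real
  assumes "0 \<le> r" "r \<le> 1 / 2"
  shows "(\<Sum>j=1..n. r ^ j) \<le> 2 * r"
proof -
  have "(\<Sum>j=1..n. r ^ j) \<le> (r - r ^ Suc n) / (1 - r)"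
    using assms by (simp add: sum_gp)
  also have "\<dots> \<le> r / (1 - r)"
    using assms by (intro divide_right_mono) auto
  also have "\<dots> \<le> 2 * r"
    using assms by (simp add: field_simps mult_left_le)
  finally show ?thesis .
qed

lemma prime_powers_subset_image:
  fixes x y :: nat
  shows "{d. d \<le> x \<and> primepow d \<and> aprimedivisor d \<le> y}
    \<subseteq> (\<lambda>(p, k). p ^ k) ` ({p. prime p \<and> p \<le> y} \<times> {1..x})"
proof
  fix d assume "d \<in> {d. d \<le> x \<and> primepow d \<and> aprimedivisor d \<le> y}"
  then obtain p k where d: "prime p" "k > 0" "d = p ^ k" "d \<le> x" "aprimedivisor d \<le> y"
    unfolding primepow_def by blast
  have "k < 2 ^ k" by (rule less_exp)
  also have "2 ^ k \<le> p ^ k" using prime_ge_2_nat[OF \<open>prime p\<close>] by (simp add: power_mono)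
  finally have "k \<in> {1..x}" using d by auto
  moreover have "aprimedivisor d = p" using d by (simp add: aprimedivisor_prime_power)
  ultimately show "d \<in> (\<lambda>(p, k). p ^ k) ` ({p. prime p \<and> p \<le> y} \<times> {1..x})"
    using d by (auto intro: image_eqI[of _ _ "(p, k)"])
qed

lemma sum_mangoldt_div_prime_powers_le:
  fixes x y :: nat
  assumes "y \<ge> 1"
  shows "(\<Sum>d | d \<le> x \<and> primepow d \<and> aprimedivisor d \<le> y. mangoldt d / real d) \<le> 4 * ln (real y)"
proof -
  define P where "P = {p. prime p \<and> p \<le> y}"
  define pow where "pow = (\<lambda>(p, k). p ^ k :: nat)"
  have fin: "finite (P \<times> {1..x})" by (simp add: P_def)
  have nonneg: "0 \<le> mangoldt d / real d" for d :: nat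
    by (simp add: mangoldt_nonneg)
  have "{d. d \<le> x \<and> primepow d \<and> aprimedivisor d \<le> y} \<subseteq> pow ` (P \<times> {1..x})"
    unfolding P_def pow_def by (rule prime_powers_subset_image)
  then have "(\<Sum>d | d \<le> x \<and> primepow d \<and> aprimedivisor d \<le> y. mangoldt d / real d)
      \<le> (\<Sum>d \<in> pow ` (P \<times> {1..x}). mangoldt d / real d)"
    using fin nonneg by (intro sum_mono2) auto
  also have "\<dots> \<le> (\<Sum>z \<in> P \<times> {1..x}. mangoldt (pow z) / real (pow z))"
    using sum_image_le[OF fin, of "\<lambda>d. mangoldt d / real d" pow] nonneg by (simp add: o_def)
  also have "\<dots> = (\<Sum>p\<in>P. \<Sum>k=1..x. mangoldt (p ^ k) / real (p ^ k))"
    by (simp add: sum.cartesian_product pow_def split_beta)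
  also have "\<dots> = (\<Sum>p\<in>P. ln (real p) * (\<Sum>k=1..x. (1 / real p) ^ k))"
  proof (intro sum.cong refl)
    fix p assume "p \<in> P"
    then show "(\<Sum>k=1..x. mangoldt (p ^ k) / real (p ^ k)) = ln (real p) * (\<Sum>k=1..x. (1 / real p) ^ k)"
      unfolding sum_distrib_left by (intro sum.cong refl) (auto simp: P_def power_one_over)
  qed
  also have "\<dots> \<le> (\<Sum>p\<in>P. ln (real p) * (2 * (1 / real p)))"
  proof (intro sum_mono mult_left_mono sum_power_le_double)
    fix p assume "p \<in> P"
    then have "2 \<le> p" by (simp add: P_def prime_ge_2_nat)
    then show "1 / real p \<le> 1 / 2" "0 \<le> ln (real p)" by (auto simp: field_simps)
  qed simp
  also have "\<dots> = 2 * (\<Sum>p\<in>P. ln (real p) / real p)"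
    by (simp add: sum_distrib_left mult.commute)
  also have "\<dots> \<le> 4 * ln (real y)"
    using sum_ln_prime_div_prime_le[OF assms] by (simp add: P_def)
  finally show ?thesis .
qed

definition smooth_numbers :: "nat \<Rightarrow> nat \<Rightarrow> nat set" where
  "smooth_numbers x y = {m \<in> {1..x}. \<forall>q. prime q \<longrightarrow> q dvd m \<longrightarrow> q \<le> y}"

lemma mangoldt_mult_card_smooth_multiples_le:
  fixes d x y :: nat
  assumes "d \<ge> 1"
  shows "mangoldt d * real (card {m \<in> smooth_numbers x y. d dvd m})
    \<le> (if primepow d \<and> aprimedivisor d \<le> y then real x * (mangoldt d / real d) else 0)"
proof (cases "primepow d")
  case True
  then have "d > 1" by (simp add: primepow_gt_Suc_0)
  then have "prime (aprimedivisor d)" "aprimedivisor d dvd d"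
    by (auto intro: prime_aprimedivisor' aprimedivisor_dvd')
  show ?thesis
  proof (cases "aprimedivisor d \<le> y")
    case True
    have "card {m \<in> smooth_numbers x y. d dvd m} \<le> card {m \<in> {1..x}. d dvd m}"
      by (intro card_mono) (auto simp: smooth_numbers_def)
    then have "real (card {m \<in> smooth_numbers x y. d dvd m}) \<le> real x / real d"
      using card_multiples_le[of d x] assms by linarith
    then have "mangoldt d * real (card {m \<in> smooth_numbers x y. d dvd m}) \<le> mangoldt d * (real x / real d)"
      by (rule mult_left_mono) (simp add: mangoldt_nonneg)
    then show ?thesis
      using True \<open>primepow d\<close> by (simp add: mult.commute)
  next
    case False
    then have "{m \<in> smooth_numbers x y. d dvd m} = {}"
      using \<open>prime (aprimedivisor d)\<close> \<open>aprimedivisor d dvd d\<close>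
      by (auto simp: smooth_numbers_def dest: dvd_trans)
    then show ?thesis using False by (simp only: card.empty) simp
  qed
qed (simp add: mangoldt_def)

lemma sum_ln_smooth_numbers_le:
  fixes x y :: nat
  assumes "y \<ge> 1"
  shows "(\<Sum>m \<in> smooth_numbers x y. ln (real m)) \<le> real x * (4 * ln (real y))"
proof -
  define D where "D = {d. d \<le> x \<and> primepow d \<and> aprimedivisor d \<le> y}"
  have "D \<subseteq> {1..x}"
    by (auto simp: D_def Suc_le_eq primepow_gt_0_nat)
  have "(\<Sum>m \<in> smooth_numbers x y. ln (real m))
      = (\<Sum>d\<in>{1..x}. mangoldt d * real (card {m \<in> smooth_numbers x y. d dvd m}))"
    by (rule sum_ln_eq_sum_mangoldt) (auto simp: smooth_numbers_def)
  also have "\<dots> \<le> (\<Sum>d\<in>{1..x}. if d \<in> D then real x * (mangoldt d / real d) else 0)"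
    using mangoldt_mult_card_smooth_multiples_le by (intro sum_mono) (auto simp: D_def)
  also have "\<dots> = real x * (\<Sum>d\<in>D. mangoldt d / real d)"
    using \<open>D \<subseteq> {1..x}\<close>
    by (simp add: sum.If_cases Int_absorb1 sum_distrib_left flip: sum.inter_restrict)
  also have "\<dots> \<le> real x * (4 * ln (real y))"
    using sum_mangoldt_div_prime_powers_le[OF assms, of x] by (simp add: D_def mult_left_mono)
  finally show ?thesis .
qed

text \<open>Writing \<open>ln x = ln m + ln (x/m)\<close> and using \<open>\<Sum>\<^sub>m\<^sub>\<le>\<^sub>x ln (x/m) \<le> x\<close> turns the
  logarithmic bound into a bound on the count.\<close>
lemma card_smooth_numbers_le:
  fixes x y :: nat
  assumes "y \<ge> 1"
  shows "real (card (smooth_numbers x y)) * ln (real x) \<le> real x * (4 * ln (real y) + 1)"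
proof -
  have sub: "smooth_numbers x y \<subseteq> {1..x}" by (auto simp: smooth_numbers_def)
  have "real (card (smooth_numbers x y)) * ln (real x)
      = (\<Sum>m \<in> smooth_numbers x y. ln (real m) + ln (real x / real m))"
  proof -
    have "ln (real m) + ln (real x / real m) = ln (real x)" if "m \<in> smooth_numbers x y" for m
      using that sub by (auto simp: ln_div)
    then show ?thesis by simp
  qed
  also have "\<dots> = (\<Sum>m \<in> smooth_numbers x y. ln (real m))
      + (\<Sum>m \<in> smooth_numbers x y. ln (real x / real m))"
    by (rule sum.distrib)
  also have "(\<Sum>m \<in> smooth_numbers x y. ln (real x / real m)) \<le> (\<Sum>m=1..x. ln (real x / real m))"
    using sub by (intro sum_mono2) auto
  also have "\<dots> \<le> real x" by (rule sum_ln_ratio_le)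
  finally show ?thesis
    using sum_ln_smooth_numbers_le[OF assms, of x] by (simp add: algebra_simps)
qed

lemma sum_inverse_squares_tail_le:
  fixes y :: nat
  assumes "y \<ge> 1"
  shows "(\<Sum>d=y+1..x. 1 / real d ^ 2) \<le> 1 / real y"
proof -
  have tail: "(\<Sum>d=y+1..y+n. 1 / real d ^ 2) \<le> 1 / real y - 1 / real (y + n)" for n
  proof (induction n)
    case (Suc n)
    define a where "a = real (y + n)"
    have "a \<ge> 1" using assms by (simp add: a_def)
    then have "1 / (a + 1) ^ 2 \<le> 1 / (a * (a + 1))"
      by (intro divide_left_mono) (auto simp: power2_eq_square)
    also have "\<dots> = 1 / a - 1 / (a + 1)"
      using \<open>a \<ge> 1\<close> by (simp add: field_simps)
    finally have "1 / (a + 1) ^ 2 \<le> 1 / a - 1 / (a + 1)" .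
    then show ?case
      using Suc.IH by (simp add: a_def add_ac)
  qed simp
  show ?thesis
  proof (cases "x \<le> y")
    case False
    then show ?thesis
      using tail[of "x - y"] by simp (smt (verit) divide_nonneg_nonneg of_nat_0_le_iff)
  qed simp
qed

lemma card_divisible_by_large_square_le:
  fixes x y :: nat
  assumes "y \<ge> 1"
  shows "real (card {m \<in> {1..x}. \<exists>d\<in>{y+1..x}. d^2 dvd m}) \<le> real x / real y"
proof -
  have "{m \<in> {1..x}. \<exists>d\<in>{y+1..x}. d^2 dvd m} = (\<Union>d\<in>{y+1..x}. {m \<in> {1..x}. d^2 dvd m})"
    by auto
  then have "real (card {m \<in> {1..x}. \<exists>d\<in>{y+1..x}. d^2 dvd m})
      \<le> (\<Sum>d=y+1..x. real (card {m \<in> {1..x}. d^2 dvd m}))"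
    using card_UN_le[of "{y+1..x}" "\<lambda>d. {m \<in> {1..x}. d^2 dvd m}"]
    by (simp flip: of_nat_sum)
  also have "\<dots> \<le> (\<Sum>d=y+1..x. real x * (1 / real d ^ 2))"
    using card_multiples_le[of "_^2" x] by (intro sum_mono) simp
  also have "\<dots> \<le> real x * (1 / real y)"
    unfolding sum_distrib_left[symmetric]
    using sum_inverse_squares_tail_le[OF assms] by (intro mult_left_mono) simp_all
  finally show ?thesis by simp
qed

definition simple_large_prime_multiples :: "nat \<Rightarrow> nat \<Rightarrow> nat set" where
  "simple_large_prime_multiples K x = {m \<in> {1..x}. \<exists>p. prime p \<and> K < p \<and> p dvd m \<and> \<not> p^2 dvd m}"

lemma exact_prime_divisor_or_large_square_or_smooth:
  fixes K x y m :: nat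
  assumes "K \<le> y" and "m \<in> {1..x}"
  shows "m \<in> simple_large_prime_multiples K x \<or> (\<exists>d\<in>{y+1..x}. d^2 dvd m)
    \<or> m \<in> smooth_numbers x y"
proof (cases "m \<in> smooth_numbers x y")
  case False
  then obtain q where q: "prime q" "q dvd m" "y < q"
    using assms(2) unfolding smooth_numbers_def by auto
  moreover have "q \<le> x" using q(2) assms(2) by (auto dest: dvd_imp_le)
  ultimately show ?thesis
    using \<open>K \<le> y\<close> assms(2) by (cases "q^2 dvd m") (auto simp: simple_large_prime_multiples_def)
qed simp

lemma card_le_simple_plus_square_plus_smooth:
  fixes K x y :: nat
  assumes "K \<le> y"
  shows "real x \<le> real (card (simple_large_prime_multiples K x))
    + real (card {m \<in> {1..x}. \<exists>d\<in>{y+1..x}. d^2 dvd m}) + real (card (smooth_numbers x y))"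
proof -
  define E where "E = simple_large_prime_multiples K x"
  define Sq where "Sq = {m \<in> {1..x}. \<exists>d\<in>{y+1..x}. d^2 dvd m}"
  have "{1..x} \<subseteq> E \<union> Sq \<union> smooth_numbers x y"
  proof
    fix m assume "m \<in> {1..x}"
    from exact_prime_divisor_or_large_square_or_smooth[OF \<open>K \<le> y\<close> this] \<open>m \<in> {1..x}\<close>
    show "m \<in> E \<union> Sq \<union> smooth_numbers x y" by (auto simp: E_def Sq_def)
  qed
  then have "card {1..x} \<le> card (E \<union> Sq \<union> smooth_numbers x y)"
    by (intro card_mono) (auto simp: E_def Sq_def smooth_numbers_def simple_large_prime_multiples_def)
  also have "\<dots> \<le> card E + card Sq + card (smooth_numbers x y)"
    using card_Un_le[of "E \<union> Sq"] card_Un_le[of E Sq] by (meson add_le_mono1 order_trans)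
  finally show ?thesis by (simp add: E_def Sq_def)
qed

lemma density_simple_large_prime_multiples_ge:
  fixes K x :: nat
  assumes "K \<ge> 1" and "x \<ge> 2"
  shows "1 - 4 * (ln (real K) / ln (real x)) - (4 * ln (ln (real x) + 1) + 2) / ln (real x)
    \<le> real (card (simple_large_prime_multiples K x)) / real x"
proof -
  define a where "a = ln (real x)"
  define Z where "Z = nat \<lceil>a\<rceil>"
  define y where "y = K * Z"
  define E where "E = simple_large_prime_multiples K x"
  define Sq where "Sq = {m \<in> {1..x}. \<exists>d\<in>{y+1..x}. d^2 dvd m}"
  have "a > 0" using assms(2) by (simp add: a_def)
  then have "real Z \<ge> a" "real Z \<le> a + 1" "Z \<ge> 1"
    unfolding Z_def by linarith+
  have "K \<le> y"
    unfolding y_def using \<open>Z \<ge> 1\<close> by (metis mult_le_mono2 nat_mult_1_right)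
  then have "y \<ge> 1" using \<open>K \<ge> 1\<close> by linarith
  have "Z \<le> y"
    unfolding y_def using \<open>K \<ge> 1\<close> by (metis mult_le_mono1 nat_mult_1)
  then have "a \<le> real y"
    using \<open>real Z \<ge> a\<close> by linarith
  have "ln (real y) = ln (real K) + ln (real Z)"
    unfolding y_def of_nat_mult using \<open>K \<ge> 1\<close> \<open>Z \<ge> 1\<close> by (intro ln_mult_pos) auto
  also have "\<dots> \<le> ln (real K) + ln (a + 1)"
    using \<open>real Z \<le> a + 1\<close> \<open>Z \<ge> 1\<close> by simp
  finally have ln_y: "ln (real y) \<le> ln (real K) + ln (a + 1)" .
  have x_le: "real x \<le> real (card E) + real (card Sq) + real (card (smooth_numbers x y))"
    unfolding E_def Sq_def by (rule card_le_simple_plus_square_plus_smooth[OF \<open>K \<le> y\<close>])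
  have "real (card Sq) \<le> real x / real y"
    unfolding Sq_def by (rule card_divisible_by_large_square_le[OF \<open>y \<ge> 1\<close>])
  also have "\<dots> \<le> real x / a"
    using \<open>a > 0\<close> \<open>a \<le> real y\<close> by (intro divide_left_mono) auto
  finally have Sq_le: "real (card Sq) \<le> real x / a" .
  have "real (card (smooth_numbers x y)) * a \<le> real x * (4 * ln (real y) + 1)"
    unfolding a_def by (rule card_smooth_numbers_le[OF \<open>y \<ge> 1\<close>])
  also have "\<dots> \<le> real x * (4 * ln (real K) + 4 * ln (a + 1) + 1)"
    using ln_y by (intro mult_left_mono) auto
  finally have Sm_le: "real (card (smooth_numbers x y)) \<le> real x * (4 * ln (real K) + 4 * ln (a + 1) + 1) / a"
    using \<open>a > 0\<close> by (simp add: pos_le_divide_eq)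
  have "real x * (1 - 4 * (ln (real K) / a) - (4 * ln (a + 1) + 2) / a)
      = real x - real x / a - real x * (4 * ln (real K) + 4 * ln (a + 1) + 1) / a"
    using \<open>a > 0\<close> by (simp add: field_simps)
  also have "\<dots> \<le> real (card E)"
    using x_le Sq_le Sm_le by linarith
  finally show ?thesis
    using assms(2) by (simp add: a_def E_def pos_le_divide_eq mult.commute)
qed

lemma simple_large_prime_multiples_subset_events:
  "simple_large_prime_multiples K x
    \<subseteq> {m \<in> {1..x}. \<exists>p. prime p \<and> p > K \<and> (\<forall>k\<in>{1..K}. event_A k p m)}"
proof
  fix m assume "m \<in> simple_large_prime_multiples K x"
  then obtain p where "m \<in> {1..x}" "prime p" "K < p" "p dvd m" "\<not> p^2 dvd m"
    unfolding simple_large_prime_multiples_def by blast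
  moreover from this have "\<forall>k\<in>{1..K}. event_A k p m"
    using event_A_if_exact_prime_divisor[of p m] by auto
  ultimately show "m \<in> {m \<in> {1..x}. \<exists>p. prime p \<and> p > K \<and> (\<forall>k\<in>{1..K}. event_A k p m)}"
    by blast
qed

lemma density_le_1: "real (card {m \<in> {1..x}. P m}) / real x \<le> 1"
proof -
  have "card {m \<in> {1..x}. P m} \<le> card {1..x}" by (intro card_mono) auto
  then show ?thesis by (cases "x = 0") simp_all
qed

lemma density_lower_bound_tendsto_1:
  fixes K :: "nat \<Rightarrow> nat"
  assumes "((\<lambda>x. ln (real (K x)) / ln (real x)) \<longlongrightarrow> 0) at_top"
  shows "((\<lambda>x. 1 - 4 * (ln (real (K x)) / ln (real x)) - (4 * ln (ln (real x) + 1) + 2) / ln (real x))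
    \<longlongrightarrow> 1) at_top"
proof -
  have "((\<lambda>t::real. (4 * ln (ln t + 1) + 2) / ln t) \<longlongrightarrow> 0) at_top"
    by real_asymp
  from filterlim_compose[OF this filterlim_real_sequentially]
  have "((\<lambda>x. (4 * ln (ln (real x) + 1) + 2) / ln (real x)) \<longlongrightarrow> 0) at_top"
    by simp
  with assms have "((\<lambda>x. 1 - 4 * (ln (real (K x)) / ln (real x)) - (4 * ln (ln (real x) + 1) + 2) / ln (real x))
    \<longlongrightarrow> 1 - 4 * 0 - 0) at_top"
    by (intro tendsto_intros)
  then show ?thesis by simp
qed

theorem proposition3:
  fixes kmax :: "nat \<Rightarrow> nat"
  assumes pos: "\<And>x. kmax x > 0"
    and growth: "((\<lambda>x. ln (real (kmax x)) / ln (real x)) \<longlongrightarrow> 0) at_top"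
  shows "((\<lambda>x. real (card {m \<in> {1..x}. \<exists>p. prime p \<and> p > kmax x \<and>
                  (\<forall>k\<in>{1..kmax x}. event_A k p m)}) / real x) \<longlongrightarrow> 1) at_top"
proof -
  define G where "G x = {m \<in> {1..x}. \<exists>p. prime p \<and> p > kmax x \<and> (\<forall>k\<in>{1..kmax x}. event_A k p m)}"
    for x
  define L where "L x = 1 - 4 * (ln (real (kmax x)) / ln (real x)) - (4 * ln (ln (real x) + 1) + 2) / ln (real x)"
    for x :: nat
  have L_tendsto: "(L \<longlongrightarrow> 1) at_top"
    unfolding L_def[abs_def] using growth by (rule density_lower_bound_tendsto_1)
  have lower: "eventually (\<lambda>x. L x \<le> real (card (G x)) / real x) at_top"
    using eventually_ge_at_top[of 2]
  proof eventually_elim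
    case (elim x)
    have "L x \<le> real (card (simple_large_prime_multiples (kmax x) x)) / real x"
      unfolding L_def using pos[of x] elim by (intro density_simple_large_prime_multiples_ge) auto
    also have "\<dots> \<le> real (card (G x)) / real x"
      unfolding G_def
      by (intro divide_right_mono of_nat_mono card_mono simple_large_prime_multiples_subset_events) auto
    finally show ?case .
  qed
  have upper: "\<forall>x. real (card (G x)) / real x \<le> 1"
    unfolding G_def by (intro allI density_le_1)
  have "((\<lambda>x. real (card (G x)) / real x) \<longlongrightarrow> 1) at_top"
    by (rule tendsto_sandwich[OF lower always_eventually[OF upper] L_tendsto tendsto_const])
  then show ?thesis
    by (simp only: G_def)
qed

end
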